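(* Let $\psi$ be a $\mathbf{\Sigma}$-piecewise linear function on $N_{\mathbb{R}}$. Then $\dim\Lambda_\psi<m$ if and only if there exist an index $k\in\{1,\dots,n\}$ and a constant $c\in\mathbb{R}$ such that $\langle\lambda,v_k\rangle=c$ for all $\lambda\in\Lambda_\psi$.
   Context: $N$ is a lattice of rank $m$, $M=\mathrm{Hom}(N,\mathbb{Z})$, $N_{\mathbb{R}}=N\otimes\mathbb{R}$, $M_{\mathbb{R}}=M\otimes\mathbb{R}$, with the natural pairing $\langle\cdot,\cdot\rangle$; $\Sigma$ is a complete simplicial fan in $N_{\mathbb{R}}$ with $n$ rays and $v_i\in N$ a nonzero lattice point on the $i$-th ray ($\mathbf{\Sigma}=(\Sigma,\{v_i\})$). A $\mathbf{\Sigma}$-piecewise linear function is a continuous $\psi:N_{\mathbb{R}}\to\mathbb{R}$ whose restriction to each cone of $\Sigma$ is linear; for each maximal cone $\sigma$, $\psi_\sigma\in M_{\mathbb{R}}$ is the linear function agreeing with $\psi$ on $\sigma$. $\Lambda_\psi\subset M_{\mathbb{R}}$ is the convex hull of $\{\psi_\sigma:\sigma\text{ a maximal cone of }\Sigma\}$. *)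

theory Defs
  imports "HOL-Analysis.Analysis"
begin

text \<open>N = integer points of real^'m (a lattice of rank m = CARD('m)); N_R = real^'m;
  M_R is identified with real^'m via the standard pairing (inner product).
  A simplicial fan with rays indexed by {0..<n} (generators v i) is encoded by the
  set Sig of index sets of its cones; the cone of an index set S is the
  nonnegative span of the v i, i in S.\<close>

definition lattice_point :: "real^'m \<Rightarrow> bool" where
  "lattice_point x \<longleftrightarrow> (\<forall>j. x $ j \<in> \<int>)"

definition gen_cone :: "(nat \<Rightarrow> real^'m) \<Rightarrow> nat set \<Rightarrow> (real^'m) set" where
  "gen_cone v S = {x. \<exists>a. (\<forall>i\<in>S. 0 \<le> a i) \<and> x = (\<Sum>i\<in>S. a i *\<^sub>R v i)}"

definition complete_simplicial_fan ::
  "nat \<Rightarrow> (nat \<Rightarrow> real^'m) \<Rightarrow> nat set set \<Rightarrow> bool" where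
  "complete_simplicial_fan n v Sig \<longleftrightarrow>
     (\<forall>i<n. lattice_point (v i) \<and> v i \<noteq> 0) \<and>
     (\<forall>S\<in>Sig. S \<subseteq> {0..<n}) \<and>
     (\<forall>i<n. {i} \<in> Sig) \<and>
     (\<forall>S\<in>Sig. \<forall>T. T \<subseteq> S \<longrightarrow> T \<in> Sig) \<and>
     (\<forall>S\<in>Sig. inj_on v S \<and> independent (v ` S)) \<and>
     (\<forall>S\<in>Sig. \<forall>T\<in>Sig. gen_cone v S \<inter> gen_cone v T = gen_cone v (S \<inter> T)) \<and>
     (\<Union>S\<in>Sig. gen_cone v S) = UNIV"

definition maximal_cone :: "nat set set \<Rightarrow> nat set \<Rightarrow> bool" where
  "maximal_cone Sig S \<longleftrightarrow> S \<in> Sig \<and> (\<forall>T\<in>Sig. S \<subseteq> T \<longrightarrow> T = S)"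

definition piecewise_linear ::
  "(nat \<Rightarrow> real^'m) \<Rightarrow> nat set set \<Rightarrow> (real^'m \<Rightarrow> real) \<Rightarrow> bool" where
  "piecewise_linear v Sig \<psi> \<longleftrightarrow> continuous_on UNIV \<psi> \<and>
     (\<forall>S\<in>Sig. \<exists>l::real^'m. \<forall>x\<in>gen_cone v S. \<psi> x = l \<bullet> x)"

definition psi_sigma_set ::
  "(nat \<Rightarrow> real^'m) \<Rightarrow> nat set set \<Rightarrow> (real^'m \<Rightarrow> real) \<Rightarrow> (real^'m) set" where
  "psi_sigma_set v Sig \<psi> =
     {l. \<exists>S. maximal_cone Sig S \<and> (\<forall>x\<in>gen_cone v S. \<psi> x = l \<bullet> x)}"

definition Lambda_psi ::
  "(nat \<Rightarrow> real^'m) \<Rightarrow> nat set set \<Rightarrow> (real^'m \<Rightarrow> real) \<Rightarrow> (real^'m) set" where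
  "Lambda_psi v Sig \<psi> = convex hull (psi_sigma_set v Sig \<psi>)"

end

theory Submission imports Defs begin

text \<open>If \<open>\<Lambda>\<^sub>\<psi>\<close> lies in an affine hyperplane \<open>{l. l \<bullet> u = c\<^sub>0}\<close>, then every \<open>\<psi>\<^sub>\<sigma>\<close> has slope
  \<open>c\<^sub>0\<close> in direction \<open>u\<close>, so \<open>\<psi>\<close> is affine with slope \<open>c\<^sub>0\<close> along every line parallel to \<open>u\<close>.
  Let \<open>\<tau>\<close> be the smallest cone containing \<open>u\<close>, so that \<open>u\<close> is a positive combination of the
  \<open>v\<^sub>i\<close>, \<open>i \<in> \<tau>\<close>, and fix \<open>k \<in> \<tau>\<close>. For an interior point \<open>x\<close> of a maximal cone \<open>\<sigma>\<close>, the
  points \<open>x + t u\<close> and \<open>x + s v\<^sub>k + t u\<close> lie, for large \<open>t\<close>, in one cone containing \<open>\<tau>\<close>, on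
  which \<open>\<psi>\<close> is linear; translating back along \<open>u\<close> gives \<open>\<psi>\<^sub>\<sigma> \<bullet> v\<^sub>k = \<psi>(v\<^sub>k)\<close>. Conversely,
  a set on which \<open>\<lambda> \<bullet> v\<^sub>k\<close> is constant lies in a hyperplane, as \<open>v\<^sub>k \<noteq> 0\<close>.\<close>

lemma gen_cone_add: "x \<in> gen_cone v S \<Longrightarrow> y \<in> gen_cone v S \<Longrightarrow> x + y \<in> gen_cone v S"
  unfolding gen_cone_def
proof clarify
  fix a b :: "nat \<Rightarrow> real" assume "\<forall>i\<in>S. 0 \<le> a i" "\<forall>i\<in>S. 0 \<le> b i"
  then show "\<exists>c. (\<forall>i\<in>S. 0 \<le> c i) \<and>
      (\<Sum>i\<in>S. a i *\<^sub>R v i) + (\<Sum>i\<in>S. b i *\<^sub>R v i) = (\<Sum>i\<in>S. c i *\<^sub>R v i)"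
    by (intro exI[of _ "\<lambda>i. a i + b i"]) (auto simp: sum.distrib scaleR_add_left)
qed

lemma gen_cone_scaleR: "x \<in> gen_cone v S \<Longrightarrow> 0 \<le> c \<Longrightarrow> c *\<^sub>R x \<in> gen_cone v S"
  unfolding gen_cone_def
proof clarify
  fix a :: "nat \<Rightarrow> real" assume "\<forall>i\<in>S. 0 \<le> a i" "0 \<le> c"
  then show "\<exists>b. (\<forall>i\<in>S. 0 \<le> b i) \<and> c *\<^sub>R (\<Sum>i\<in>S. a i *\<^sub>R v i) = (\<Sum>i\<in>S. b i *\<^sub>R v i)"
    by (intro exI[of _ "\<lambda>i. c * a i"]) (auto simp: scaleR_sum_right)
qed

lemma zero_in_gen_cone: "0 \<in> gen_cone v S"
  unfolding gen_cone_def by (intro CollectI exI[of _ "\<lambda>i. 0"]) auto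

lemma convex_gen_cone: "convex (gen_cone v S)"
  unfolding convex_def by (auto intro!: gen_cone_add gen_cone_scaleR)

lemma generator_in_gen_cone:
  assumes "finite S" "i \<in> S"
  shows "v i \<in> gen_cone v S"
proof -
  have "(\<Sum>j\<in>S. (if j = i then 1 else 0) *\<^sub>R v j) = (\<Sum>j\<in>S. if j = i then v j else 0)"
    by (rule sum.cong) auto
  also have "\<dots> = v i" using assms by simp
  finally show ?thesis
    unfolding gen_cone_def by (intro CollectI exI[of _ "\<lambda>j. if j = i then 1 else 0"]) auto
qed

lemma gen_cone_mono:
  assumes "finite S" "T \<subseteq> S"
  shows "gen_cone v T \<subseteq> gen_cone v S"
proof
  fix x assume "x \<in> gen_cone v T"
  then obtain a where a: "\<forall>i\<in>T. 0 \<le> a i" "x = (\<Sum>i\<in>T. a i *\<^sub>R v i)"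
    unfolding gen_cone_def by auto
  define b where "b i = (if i \<in> T then a i else 0)" for i
  have "(\<Sum>i\<in>S. b i *\<^sub>R v i) = (\<Sum>i\<in>T. b i *\<^sub>R v i)"
    using assms by (intro sum.mono_neutral_right) (auto simp: b_def)
  also have "\<dots> = x" using a by (simp add: b_def)
  finally show "x \<in> gen_cone v S"
    unfolding gen_cone_def using a by (intro CollectI exI[of _ b]) (auto simp: b_def)
qed

lemma sum_scaleR_in_convex_cone_hull:
  "finite S \<Longrightarrow> \<forall>i\<in>S. 0 \<le> a i \<Longrightarrow> \<forall>i\<in>S. f i \<in> convex_cone hull T \<Longrightarrow>
    (\<Sum>i\<in>S. a i *\<^sub>R f i) \<in> convex_cone hull T"
  by (induction S rule: finite_induct)
     (auto intro!: convex_cone_hull_add convex_cone_hull_mul convex_cone_hull_contains_0)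

lemma gen_cone_eq_convex_cone_hull:
  assumes "finite S"
  shows "gen_cone v S = convex_cone hull (v ` S)"
proof
  show "gen_cone v S \<subseteq> convex_cone hull v ` S"
    unfolding gen_cone_def using assms
    by clarify (rule sum_scaleR_in_convex_cone_hull, auto intro: hull_inc)
  show "convex_cone hull v ` S \<subseteq> gen_cone v S"
  proof (rule hull_minimal)
    show "v ` S \<subseteq> gen_cone v S" using generator_in_gen_cone assms by auto
    show "convex_cone (gen_cone v S)"
      unfolding convex_cone_def conic_def
      using zero_in_gen_cone convex_gen_cone gen_cone_scaleR by blast
  qed
qed

lemma closed_gen_cone: "finite S \<Longrightarrow> closed (gen_cone v S :: (real^'m) set)"
  by (simp add: gen_cone_eq_convex_cone_hull closed_convex_cone_hull)

lemma independent_image_coefficient_zero: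
  fixes v :: "'i \<Rightarrow> 'a::real_vector"
  assumes inj: "inj_on v S" and ind: "independent (v ` S)" and fin: "finite S"
    and sum0: "(\<Sum>j\<in>S. c j *\<^sub>R v j) = 0" and i: "i \<in> S"
  shows "c i = 0"
proof -
  define u where "u w = c (the_inv_into S v w)" for w
  have u_v: "u (v j) = c j" if "j \<in> S" for j
    using the_inv_into_f_f[OF inj that] by (simp add: u_def)
  have "(\<Sum>w\<in>v ` S. u w *\<^sub>R w) = (\<Sum>j\<in>S. c j *\<^sub>R v j)"
    by (simp add: sum.reindex[OF inj] u_v)
  then have "u (v i) = 0"
    using real_vector.independentD[OF ind finite_imageI[OF fin] subset_refl] sum0 i by auto
  then show ?thesis using u_v i by simp
qed

lemma small_step_dist:
  fixes p w :: "'a::real_normed_vector"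
  assumes "0 < d"
  shows "\<exists>e>0. dist p (p + e *\<^sub>R w) < d"
proof (intro exI conjI)
  have pos: "norm w + 1 > 0" by (simp add: add_nonneg_pos)
  show "d / (norm w + 1) > 0" using assms pos by simp
  have "dist p (p + (d / (norm w + 1)) *\<^sub>R w) = d * (norm w / (norm w + 1))"
    using assms by (simp add: dist_norm)
  also have "\<dots> < d" using assms by (simp add: divide_less_eq add_nonneg_pos)
  finally show "dist p (p + (d / (norm w + 1)) *\<^sub>R w) < d" .
qed

lemma inner_constant_on_convex_hull_iff:
  fixes P :: "'a::real_inner set"
  shows "(\<forall>l\<in>convex hull P. l \<bullet> w = c) \<longleftrightarrow> (\<forall>l\<in>P. l \<bullet> w = c)"
proof
  assume "\<forall>l\<in>P. l \<bullet> w = c"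
  then have "P \<subseteq> {l. w \<bullet> l = c}" by (auto simp: inner_commute)
  then have "convex hull P \<subseteq> {l. w \<bullet> l = c}" by (rule hull_minimal) (rule convex_hyperplane)
  then show "\<forall>l\<in>convex hull P. l \<bullet> w = c" by (auto simp: inner_commute)
qed (simp add: hull_inc)

lemma aff_dim_lt_iff_subset_hyperplane:
  fixes L :: "'a::euclidean_space set"
  shows "aff_dim L < DIM('a) \<longleftrightarrow> (\<exists>u c. u \<noteq> 0 \<and> (\<forall>l\<in>L. l \<bullet> u = c))"
proof
  assume "aff_dim L < DIM('a)"
  then obtain u c where "u \<noteq> 0" "L \<subseteq> {x. u \<bullet> x = c}"
    by (rule aff_lowdim_subset_hyperplane)
  moreover from this have "\<forall>l\<in>L. l \<bullet> u = c" by (auto simp: inner_commute)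
  ultimately show "\<exists>u c. u \<noteq> 0 \<and> (\<forall>l\<in>L. l \<bullet> u = c)" by blast
next
  assume "\<exists>u c. u \<noteq> 0 \<and> (\<forall>l\<in>L. l \<bullet> u = c)"
  then obtain u c where u: "u \<noteq> 0" and "\<forall>l\<in>L. l \<bullet> u = c" by blast
  then have "L \<subseteq> {x. u \<bullet> x = c}" by (auto simp: inner_commute)
  then have "aff_dim L \<le> aff_dim {x. u \<bullet> x = c}" by (rule aff_dim_subset)
  also have "\<dots> = DIM('a) - 1" using u by simp
  finally show "aff_dim L < DIM('a)" by simp
qed

locale simplicial_fan =
  fixes n :: nat and v :: "nat \<Rightarrow> real^'m" and Sig :: "nat set set"
  assumes fan: "complete_simplicial_fan n v Sig"
begin

lemmas fan_conditions = fan[unfolded complete_simplicial_fan_def]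

lemma generator_nonzero: "i < n \<Longrightarrow> v i \<noteq> 0"
  using fan_conditions by simp

lemma cone_subset_rays: "S \<in> Sig \<Longrightarrow> S \<subseteq> {0..<n}"
  using fan_conditions by simp

lemma face_in_Sig: "S \<in> Sig \<Longrightarrow> T \<subseteq> S \<Longrightarrow> T \<in> Sig"
  using fan_conditions by simp

lemma cone_independent: "S \<in> Sig \<Longrightarrow> inj_on v S \<and> independent (v ` S)"
  using fan_conditions by simp

lemma gen_cone_Int: "S \<in> Sig \<Longrightarrow> T \<in> Sig \<Longrightarrow> gen_cone v S \<inter> gen_cone v T = gen_cone v (S \<inter> T)"
  using fan_conditions by simp

lemma cone_covering: "\<exists>S\<in>Sig. x \<in> gen_cone v S"
  using fan_conditions by (metis UNIV_I UN_iff)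

lemma finite_cone: "S \<in> Sig \<Longrightarrow> finite S"
  using cone_subset_rays finite_subset by blast

lemma finite_Sig: "finite Sig"
  using cone_subset_rays by (intro finite_subset[of Sig "Pow {0..<n}"]) auto

lemma maximal_cone_above: "S \<in> Sig \<Longrightarrow> \<exists>T. maximal_cone Sig T \<and> S \<subseteq> T"
proof -
  assume "S \<in> Sig"
  then have "finite {T \<in> Sig. S \<subseteq> T}" "{T \<in> Sig. S \<subseteq> T} \<noteq> {}" using finite_Sig by auto
  then obtain T where T: "T \<in> {T \<in> Sig. S \<subseteq> T}"
    and T_max: "\<forall>U\<in>{T \<in> Sig. S \<subseteq> T}. T \<le> U \<longrightarrow> T = U"
    by (meson finite_has_maximal)
  have "maximal_cone Sig T"
    unfolding maximal_cone_def using T T_max by auto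
  then show ?thesis using T by blast
qed

lemma exists_cone_positive_combination:
  "\<exists>\<tau>\<in>Sig. \<exists>a. (\<forall>i\<in>\<tau>. 0 < a i) \<and> u = (\<Sum>i\<in>\<tau>. a i *\<^sub>R v i)"
proof -
  define A where "A = {S \<in> Sig. u \<in> gen_cone v S}"
  have "finite A" "A \<noteq> {}" using finite_Sig cone_covering[of u] unfolding A_def by auto
  then obtain \<tau> where "\<tau> \<in> A" and \<tau>_min: "\<forall>S\<in>A. S \<le> \<tau> \<longrightarrow> \<tau> = S"
    by (meson finite_has_minimal)
  then have \<tau>: "\<tau> \<in> Sig" "u \<in> gen_cone v \<tau>" unfolding A_def by auto
  obtain a where a_nonneg: "\<forall>i\<in>\<tau>. 0 \<le> a i" and u: "u = (\<Sum>i\<in>\<tau>. a i *\<^sub>R v i)"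
    using \<tau>(2) unfolding gen_cone_def by blast
  have "0 < a j" if j: "j \<in> \<tau>" for j
  proof (rule ccontr)
    assume "\<not> 0 < a j"
    then have "a j = 0" using a_nonneg j by force
    then have "u = (\<Sum>i\<in>\<tau> - {j}. a i *\<^sub>R v i)"
      using u j finite_cone[OF \<tau>(1)] by (simp add: sum.remove)
    then have "\<tau> - {j} \<in> A"
      unfolding A_def gen_cone_def using a_nonneg face_in_Sig[OF \<tau>(1)] by blast
    then show False using \<tau>_min j by blast
  qed
  then show ?thesis using \<tau>(1) u by blast
qed

text \<open>A positive combination of the generators of \<open>\<tau>\<close> lies in the relative interior of the
  cone of \<open>\<tau>\<close>, so each cone containing it has \<open>\<tau>\<close> as a face.\<close>
lemma cone_containing_positive_combination:
  assumes \<tau>: "\<tau> \<in> Sig" and a: "\<forall>i\<in>\<tau>. 0 < a i" and S: "S \<in> Sig"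
    and in_S: "(\<Sum>i\<in>\<tau>. a i *\<^sub>R v i) \<in> gen_cone v S"
  shows "\<tau> \<subseteq> S"
proof
  fix j assume j: "j \<in> \<tau>"
  let ?u = "\<Sum>i\<in>\<tau>. a i *\<^sub>R v i"
  have fin: "finite \<tau>" using finite_cone \<tau> .
  have "?u \<in> gen_cone v \<tau>"
    unfolding gen_cone_def using a by (auto intro!: exI[of _ a] less_imp_le)
  then have "?u \<in> gen_cone v (S \<inter> \<tau>)" using gen_cone_Int[OF S \<tau>] in_S by auto
  then obtain b where b: "?u = (\<Sum>i\<in>S \<inter> \<tau>. b i *\<^sub>R v i)" unfolding gen_cone_def by auto
  define b' where "b' i = (if i \<in> S then b i else 0)" for i
  have "(\<Sum>i\<in>S \<inter> \<tau>. b i *\<^sub>R v i) = (\<Sum>i\<in>\<tau>. if i \<in> S then b i *\<^sub>R v i else 0)"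
    using sum.inter_restrict[OF fin, of "\<lambda>i. b i *\<^sub>R v i" S] by (simp add: Int_commute)
  also have "\<dots> = (\<Sum>i\<in>\<tau>. b' i *\<^sub>R v i)" by (rule sum.cong) (auto simp: b'_def)
  finally have "(\<Sum>i\<in>S \<inter> \<tau>. b i *\<^sub>R v i) = (\<Sum>i\<in>\<tau>. b' i *\<^sub>R v i)" .
  then have "(\<Sum>i\<in>\<tau>. (a i - b' i) *\<^sub>R v i) = 0"
    using b by (simp add: scaleR_diff_left sum_subtractf)
  then have "a j - b' j = 0"
    using cone_independent[OF \<tau>] fin j by (intro independent_image_coefficient_zero) auto
  then show "j \<in> S" using a j unfolding b'_def by (auto split: if_splits)
qed

text \<open>Cones are closed and finitely many, so those missing \<open>p\<close> stay away from \<open>p\<close>.\<close>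
lemma cones_near_point_contain_it:
  "\<exists>d>0. \<forall>y S. dist p y < d \<longrightarrow> S \<in> Sig \<longrightarrow> y \<in> gen_cone v S \<longrightarrow> p \<in> gen_cone v S"
proof -
  define U where "U = (\<Inter>S\<in>{S \<in> Sig. p \<notin> gen_cone v S}. - gen_cone v S)"
  have "open U"
    unfolding U_def using finite_Sig finite_cone closed_gen_cone by (auto intro!: open_INT)
  moreover have "p \<in> U" unfolding U_def by simp
  ultimately obtain d where "d > 0" "ball p d \<subseteq> U" by (meson open_contains_ball)
  then show ?thesis unfolding U_def by (auto simp: subset_iff)
qed

lemma translate_into_cone_above:
  assumes \<tau>: "\<tau> \<in> Sig" and a: "\<forall>i\<in>\<tau>. 0 < a i" and u: "u = (\<Sum>i\<in>\<tau>. a i *\<^sub>R v i)"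
  shows "\<exists>t S. S \<in> Sig \<and> \<tau> \<subseteq> S \<and> x + t *\<^sub>R u \<in> gen_cone v S"
proof -
  obtain d where "d > 0" and near:
    "\<And>y S. dist u y < d \<Longrightarrow> S \<in> Sig \<Longrightarrow> y \<in> gen_cone v S \<Longrightarrow> u \<in> gen_cone v S"
    using cones_near_point_contain_it[of u] by blast
  obtain e where e: "e > 0" "dist u (u + e *\<^sub>R x) < d" using small_step_dist[OF \<open>d > 0\<close>] by blast
  obtain S where S: "S \<in> Sig" "x + (1 / e) *\<^sub>R u \<in> gen_cone v S" using cone_covering by blast
  have "e *\<^sub>R (x + (1 / e) *\<^sub>R u) = u + e *\<^sub>R x" using e by (simp add: algebra_simps)
  then have "u + e *\<^sub>R x \<in> gen_cone v S" using gen_cone_scaleR[OF S(2), of e] e by simp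
  then have "\<tau> \<subseteq> S"
    using near[OF e(2) S(1)] cone_containing_positive_combination[OF \<tau> a S(1)] u by blast
  then show ?thesis using S by blast
qed

lemma maximal_cone_contains_segment:
  assumes \<sigma>: "maximal_cone Sig \<sigma>"
  shows "\<exists>x s. 0 < s \<and> x \<in> gen_cone v \<sigma> \<and> x + s *\<^sub>R w \<in> gen_cone v \<sigma>"
proof -
  have \<sigma>_Sig: "\<sigma> \<in> Sig" using \<sigma> unfolding maximal_cone_def by auto
  define x where "x = (\<Sum>i\<in>\<sigma>. 1 *\<^sub>R v i)"
  have x_in: "x \<in> gen_cone v \<sigma>" unfolding gen_cone_def x_def by (auto intro!: exI[of _ "\<lambda>i. 1"])
  obtain d where "d > 0" and near:
    "\<And>y S. dist x y < d \<Longrightarrow> S \<in> Sig \<Longrightarrow> y \<in> gen_cone v S \<Longrightarrow> x \<in> gen_cone v S"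
    using cones_near_point_contain_it[of x] by blast
  obtain s where s: "s > 0" "dist x (x + s *\<^sub>R w) < d" using small_step_dist[OF \<open>d > 0\<close>] by blast
  obtain S where S: "S \<in> Sig" "x + s *\<^sub>R w \<in> gen_cone v S" using cone_covering by blast
  have "\<sigma> \<subseteq> S"
    using near[OF s(2) S] cone_containing_positive_combination[OF \<sigma>_Sig _ S(1), of "\<lambda>i. 1"]
    unfolding x_def by simp
  then have "S = \<sigma>" using \<sigma> S(1) unfolding maximal_cone_def by blast
  then show ?thesis using s(1) x_in S(2) by blast
qed

end

locale fan_piecewise_linear = simplicial_fan +
  fixes \<psi> :: "real^'m \<Rightarrow> real"
  assumes pwl: "piecewise_linear v Sig \<psi>"
begin

lemma linear_on_cone: "S \<in> Sig \<Longrightarrow> \<exists>l. \<forall>x\<in>gen_cone v S. \<psi> x = l \<bullet> x"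
  using pwl unfolding piecewise_linear_def by blast

text \<open>A short segment from \<open>p\<close> in direction \<open>w\<close> lies in a single cone, hence in a maximal
  cone \<open>\<sigma>\<close>, on which \<open>\<psi> = \<psi>\<^sub>\<sigma>\<close> has slope \<open>c\<close>.\<close>
lemma slope_right_of_point:
  assumes w: "\<forall>l\<in>psi_sigma_set v Sig \<psi>. l \<bullet> w = c"
  shows "\<exists>e>0. \<forall>s. 0 \<le> s \<and> s \<le> e \<longrightarrow> \<psi> (p + s *\<^sub>R w) = \<psi> p + s * c"
proof -
  obtain d where "d > 0" and near:
    "\<And>y S. dist p y < d \<Longrightarrow> S \<in> Sig \<Longrightarrow> y \<in> gen_cone v S \<Longrightarrow> p \<in> gen_cone v S"
    using cones_near_point_contain_it[of p] by blast
  obtain e where e: "e > 0" "dist p (p + e *\<^sub>R w) < d" using small_step_dist[OF \<open>d > 0\<close>] by blast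
  obtain S where S: "S \<in> Sig" "p + e *\<^sub>R w \<in> gen_cone v S" using cone_covering by blast
  have p_S: "p \<in> gen_cone v S" using near[OF e(2) S] .
  obtain \<sigma> where \<sigma>: "maximal_cone Sig \<sigma>" "S \<subseteq> \<sigma>" using maximal_cone_above[OF S(1)] by blast
  then have \<sigma>_Sig: "\<sigma> \<in> Sig" unfolding maximal_cone_def by blast
  obtain l where l: "\<forall>x\<in>gen_cone v \<sigma>. \<psi> x = l \<bullet> x" using linear_on_cone[OF \<sigma>_Sig] by blast
  have "l \<in> psi_sigma_set v Sig \<psi>" unfolding psi_sigma_set_def using \<sigma>(1) l by blast
  then have lw: "l \<bullet> w = c" using w by blast
  have S_\<sigma>: "gen_cone v S \<subseteq> gen_cone v \<sigma>" by (rule gen_cone_mono[OF finite_cone[OF \<sigma>_Sig] \<sigma>(2)])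
  show ?thesis
  proof (intro exI[of _ e] conjI allI impI e)
    fix s assume s: "0 \<le> s \<and> s \<le> e"
    have "(1 - s / e) *\<^sub>R p + (s / e) *\<^sub>R (p + e *\<^sub>R w) \<in> gen_cone v S"
      using s e by (intro convexD[OF convex_gen_cone p_S S(2)]) auto
    moreover have "(1 - s / e) *\<^sub>R p + (s / e) *\<^sub>R (p + e *\<^sub>R w) = p + s *\<^sub>R w"
      using e by (simp add: algebra_simps)
    ultimately have "\<psi> (p + s *\<^sub>R w) = l \<bullet> p + s * (l \<bullet> w)"
      using l S_\<sigma> by (auto simp: inner_add_right)
    then show "\<psi> (p + s *\<^sub>R w) = \<psi> p + s * c" using l p_S S_\<sigma> lw by auto
  qed
qed

lemma affine_along_common_slope:
  assumes u: "\<forall>l\<in>psi_sigma_set v Sig \<psi>. l \<bullet> u = c"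
  shows "\<psi> (x + t *\<^sub>R u) = \<psi> x + t * c"
proof -
  define h where "h s = \<psi> (x + s *\<^sub>R u) - s * c" for s
  have "eventually (\<lambda>b. h a = h b) (at a)" for a
  proof -
    have minus_u: "\<forall>l\<in>psi_sigma_set v Sig \<psi>. l \<bullet> (- u) = - c" using u by simp
    obtain e1 where e1: "e1 > 0"
      "\<And>s. 0 \<le> s \<Longrightarrow> s \<le> e1 \<Longrightarrow> \<psi> ((x + a *\<^sub>R u) + s *\<^sub>R u) = \<psi> (x + a *\<^sub>R u) + s * c"
      using slope_right_of_point[OF u, of "x + a *\<^sub>R u"] by blast
    obtain e2 where e2: "e2 > 0"
      "\<And>s. 0 \<le> s \<Longrightarrow> s \<le> e2 \<Longrightarrow> \<psi> ((x + a *\<^sub>R u) + s *\<^sub>R - u) = \<psi> (x + a *\<^sub>R u) + s * - c"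
      using slope_right_of_point[OF minus_u, of "x + a *\<^sub>R u"] by blast
    have "h a = h b" if "dist b a < min e1 e2" for b
    proof (cases "a \<le> b")
      case True
      then have "\<psi> ((x + a *\<^sub>R u) + (b - a) *\<^sub>R u) = \<psi> (x + a *\<^sub>R u) + (b - a) * c"
        using e1(2) that by (simp add: dist_real_def)
      then show ?thesis unfolding h_def by (simp add: algebra_simps)
    next
      case False
      then have "\<psi> ((x + a *\<^sub>R u) + (a - b) *\<^sub>R - u) = \<psi> (x + a *\<^sub>R u) + (a - b) * - c"
        using e2(2) that by (simp add: dist_real_def)
      then show ?thesis unfolding h_def by (simp add: algebra_simps)
    qed
    then show ?thesis unfolding eventually_at using e1(1) e2(1) by (metis min_less_iff_conj)
  qed
  then have "h 0 = h t" by (intro connected_local_const[OF connected_UNIV]) auto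
  then show ?thesis unfolding h_def by simp
qed

lemma psi_sigma_inner_ray:
  assumes slope: "\<forall>l\<in>psi_sigma_set v Sig \<psi>. l \<bullet> u = c"
    and \<tau>: "\<tau> \<in> Sig" and a: "\<forall>i\<in>\<tau>. 0 < a i" and u: "u = (\<Sum>i\<in>\<tau>. a i *\<^sub>R v i)"
    and k: "k \<in> \<tau>" and l: "l \<in> psi_sigma_set v Sig \<psi>"
  shows "l \<bullet> v k = \<psi> (v k)"
proof -
  obtain \<sigma> where \<sigma>: "maximal_cone Sig \<sigma>" and l_\<sigma>: "\<forall>x\<in>gen_cone v \<sigma>. \<psi> x = l \<bullet> x"
    using l unfolding psi_sigma_set_def by blast
  obtain x s where s: "s > 0" and x: "x \<in> gen_cone v \<sigma>" "x + s *\<^sub>R v k \<in> gen_cone v \<sigma>"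
    using maximal_cone_contains_segment[OF \<sigma>] by blast
  obtain t S where S: "S \<in> Sig" "\<tau> \<subseteq> S" and z: "x + t *\<^sub>R u \<in> gen_cone v S"
    using translate_into_cone_above[OF \<tau> a u] by blast
  have vk: "v k \<in> gen_cone v S" using generator_in_gen_cone finite_cone S k by blast
  obtain l' where l': "\<forall>y\<in>gen_cone v S. \<psi> y = l' \<bullet> y" using linear_on_cone[OF S(1)] by blast
  have "(x + t *\<^sub>R u) + s *\<^sub>R v k \<in> gen_cone v S"
    using s by (intro gen_cone_add[OF z] gen_cone_scaleR[OF vk]) simp
  then have "\<psi> ((x + t *\<^sub>R u) + s *\<^sub>R v k) = \<psi> (x + t *\<^sub>R u) + s * \<psi> (v k)"
    using l' z vk by (simp add: inner_add_right)
  moreover have "(x + t *\<^sub>R u) + s *\<^sub>R v k = (x + s *\<^sub>R v k) + t *\<^sub>R u" by (simp add: algebra_simps)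
  ultimately have "l \<bullet> (x + s *\<^sub>R v k) = l \<bullet> x + s * \<psi> (v k)"
    using affine_along_common_slope[OF slope] l_\<sigma> x by simp
  then show ?thesis using s by (simp add: inner_add_right)
qed

end

theorem proposition3p8:
  fixes n :: nat and v :: "nat \<Rightarrow> real^'m" and Sig :: "nat set set"
    and \<psi> :: "real^'m \<Rightarrow> real"
  assumes "complete_simplicial_fan n v Sig"
    and "piecewise_linear v Sig \<psi>"
  shows "aff_dim (Lambda_psi v Sig \<psi>) < int CARD('m) \<longleftrightarrow>
         (\<exists>k<n. \<exists>c::real. \<forall>l\<in>Lambda_psi v Sig \<psi>. l \<bullet> v k = c)"
proof -
  interpret fan_piecewise_linear n v Sig \<psi> using assms by unfold_locales
  let ?P = "psi_sigma_set v Sig \<psi>"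
  have "aff_dim (Lambda_psi v Sig \<psi>) < int CARD('m) \<longleftrightarrow> (\<exists>u c. u \<noteq> 0 \<and> (\<forall>l\<in>?P. l \<bullet> u = c))"
    using aff_dim_lt_iff_subset_hyperplane[of "Lambda_psi v Sig \<psi>"]
    by (simp add: Lambda_psi_def inner_constant_on_convex_hull_iff)
  also have "\<dots> \<longleftrightarrow> (\<exists>k<n. \<exists>c. \<forall>l\<in>?P. l \<bullet> v k = c)"
  proof
    assume "\<exists>u c. u \<noteq> 0 \<and> (\<forall>l\<in>?P. l \<bullet> u = c)"
    then obtain u c where "u \<noteq> 0" and slope: "\<forall>l\<in>?P. l \<bullet> u = c" by blast
    obtain \<tau> a where \<tau>: "\<tau> \<in> Sig" "\<forall>i\<in>\<tau>. 0 < a i" and u: "u = (\<Sum>i\<in>\<tau>. a i *\<^sub>R v i)"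
      using exists_cone_positive_combination[of u] by blast
    have "\<tau> \<noteq> {}" using u \<open>u \<noteq> 0\<close> by auto
    then obtain k where k: "k \<in> \<tau>" by blast
    then have "k < n" using cone_subset_rays[OF \<tau>(1)] by auto
    then show "\<exists>k<n. \<exists>c. \<forall>l\<in>?P. l \<bullet> v k = c"
      using psi_sigma_inner_ray[OF slope \<tau> u k] by blast
  next
    assume "\<exists>k<n. \<exists>c. \<forall>l\<in>?P. l \<bullet> v k = c"
    then show "\<exists>u c. u \<noteq> 0 \<and> (\<forall>l\<in>?P. l \<bullet> u = c)" using generator_nonzero by blast
  qed
  also have "\<dots> \<longleftrightarrow> (\<exists>k<n. \<exists>c. \<forall>l\<in>Lambda_psi v Sig \<psi>. l \<bullet> v k = c)"
    by (simp add: Lambda_psi_def inner_constant_on_convex_hull_iff)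
  finally show ?thesis .
qed

end
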